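(* Let $\mathcal{A}=\{x_0,x_1,\dots,x_n\}$ be a complex subspace arrangement in $\mathbb{C}^l$ with a linear order satisfying the ordering convention below, and let $\phi\colon D(\mathcal{A})\to D(\widetilde{\mathcal{A}''})$ be the linear map defined below. Then $\phi\circ d=d\circ\phi$.
   Context: A complex subspace arrangement in $\mathbb{C}^l$ is a finite set of complex linear subspaces of $\mathbb{C}^l$ with no two distinct members $x\subset y$. For a finite set $\mathcal{C}$ of linear subspaces of a complex vector space $W$ with a linear order, $D(\mathcal{C})$ is the cochain complex over $\mathbb{Q}$ with basis all subsets $\sigma\subseteq\mathcal{C}$, where with $\vee\sigma=\bigcap_{x\in\sigma}x$ ($\vee\emptyset=W$), $\deg\sigma=2\operatorname{codim}_W(\vee\sigma)-|\sigma|$ and for $\sigma=\{x_{i_1},\dots,x_{i_r}\}$ in increasing order, $d\sigma=\sum_{j:\vee(\sigma\setminus\{x_{i_j}\})=\vee\sigma}(-1)^j(\sigma\setminus\{x_{i_j}\})$. Setting: $\mathcal{A}'=\mathcal{A}\setminus\{x_0\}$; on $\mathcal{A}'$ define $y\sim z$ iff $x_0\cap y=x_0\cap z$, with equivalence classes $\mathcal{A}_1,\dots,\mathcal{A}_r$. The linear order on $\mathcal{A}$ is $x_0<x_1<\dots<x_n$ and is chosen so that if $i<j$, $y\in\mathcal{A}_i$, $z\in\mathcal{A}_j$, then $y<z$. Let $\widetilde{\mathcal{A}''}=\{x_0\cap y\mid y\in\mathcal{A}'\}$, a finite set of subspaces of $W=x_0$ whose elements correspond bijectively to the classes $\mathcal{A}_i$;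 order it by the order of the classes, and form $D(\widetilde{\mathcal{A}''})$ with ambient space $x_0$. Let $E=\{(y,z)\in\mathcal{A}'\times\mathcal{A}'\mid y\sim z,\ y\neq z\}$. Define $\phi$ on basis elements: $\phi(\sigma)=0$ if $x_0\notin\sigma$, or if $x_0\in\sigma$ and $\{y,z\}\subseteq\sigma$ for some $(y,z)\in E$; otherwise $\sigma=\{x_0,x_{i_1},\dots,x_{i_r}\}$ and $\phi(\sigma)=(-1)^r\{x_0\cap x_{i_1},\dots,x_0\cap x_{i_r}\}$ (in particular $\phi(\{x_0\})=\emptyset$). *)

theory Defs
  imports "HOL-Analysis.Analysis"
begin

text \<open>Complex linear subspaces of C^l = complex^'l, via the complex vector-space
structure vec (scalar multiplication *s) from Cartesian_Space.\<close>

definition csub :: "(complex ^ 'l) set \<Rightarrow> bool" where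
  "csub S \<longleftrightarrow> vec.subspace S"

text \<open>A complex subspace arrangement x_0,...,x_n (listed in its linear order):
distinct complex subspaces, no proper inclusions.\<close>
definition is_arrangement :: "nat \<Rightarrow> (nat \<Rightarrow> (complex ^ 'l) set) \<Rightarrow> bool" where
  "is_arrangement n x \<longleftrightarrow> inj_on x {0..n} \<and> (\<forall>i\<le>n. csub (x i))
     \<and> (\<forall>i\<le>n. \<forall>j\<le>n. x i \<subseteq> x j \<longrightarrow> i = j)"

text \<open>Cochain complex D(C): a cochain is a Q-valued function on subsets of C
(the coefficient of the basis element sigma); it is supported on Pow C.
The linear order on C is encoded by an injective key function.\<close>

definition join :: "'v set \<Rightarrow> 'v set set \<Rightarrow> 'v set" where
  "join W \<sigma> = W \<inter> \<Inter>\<sigma>"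

text \<open>position (1-based) of y in sigma listed in increasing order\<close>
definition rk :: "('v set \<Rightarrow> nat) \<Rightarrow> 'v set set \<Rightarrow> 'v set \<Rightarrow> nat" where
  "rk key \<sigma> y = card {z \<in> \<sigma>. key z \<le> key y}"

definition deg :: "(complex ^ 'l) set \<Rightarrow> (complex ^ 'l) set set \<Rightarrow> int" where
  "deg W \<sigma> = 2 * (int (vec.dim W) - int (vec.dim (join W \<sigma>))) - int (card \<sigma>)"

text \<open>coefficient of tau in d(sigma)\<close>
definition dcoef :: "'v set \<Rightarrow> ('v set \<Rightarrow> nat) \<Rightarrow> 'v set set \<Rightarrow> 'v set set \<Rightarrow> rat" where
  "dcoef W key \<sigma> \<tau> = (\<Sum>y\<in>\<sigma>. if \<tau> = \<sigma> - {y} \<and> join W \<tau> = join W \<sigma>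
                               then (-1) ^ rk key \<sigma> y else 0)"

definition dmap :: "'v set \<Rightarrow> 'v set set \<Rightarrow> ('v set \<Rightarrow> nat)
    \<Rightarrow> ('v set set \<Rightarrow> rat) \<Rightarrow> ('v set set \<Rightarrow> rat)" where
  "dmap W C key c = (\<lambda>\<tau>. \<Sum>\<sigma>\<in>Pow C. c \<sigma> * dcoef W key \<sigma> \<tau>)"

text \<open>coefficient of rho in phi(sigma)\<close>
definition phicoef :: "'v set \<Rightarrow> 'v set set \<Rightarrow> 'v set set \<Rightarrow> rat" where
  "phicoef x0 \<sigma> \<rho> =
     (if x0 \<in> \<sigma>
         \<and> \<not> (\<exists>y\<in>\<sigma> - {x0}. \<exists>z\<in>\<sigma> - {x0}. y \<noteq> z \<and> x0 \<inter> y = x0 \<inter> z)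
         \<and> \<rho> = (\<lambda>y. x0 \<inter> y) ` (\<sigma> - {x0})
      then (-1) ^ card (\<sigma> - {x0}) else 0)"

definition phimap :: "'v set \<Rightarrow> 'v set set \<Rightarrow> ('v set set \<Rightarrow> rat) \<Rightarrow> ('v set set \<Rightarrow> rat)" where
  "phimap x0 A c = (\<lambda>\<rho>. \<Sum>\<sigma>\<in>Pow A. c \<sigma> * phicoef x0 \<sigma> \<rho>)"

definition keyA :: "nat \<Rightarrow> (nat \<Rightarrow> 'v set) \<Rightarrow> 'v set \<Rightarrow> nat" where
  "keyA n x y = (LEAST i. i \<le> n \<and> x i = y)"

text \<open>order key of A''~ = {x_0 \<inter> y | y \<in> A'}: ordered by the order of the classes,
i.e. by the least index of a member of the corresponding class\<close>
definition keyA'' :: "nat \<Rightarrow> (nat \<Rightarrow> 'v set) \<Rightarrow> 'v set \<Rightarrow> nat" where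
  "keyA'' n x u = (LEAST i. 1 \<le> i \<and> i \<le> n \<and> x 0 \<inter> x i = u)"

end

theory Submission
  imports Defs
begin

text \<open>
Both sides are linear, so it suffices to compare the coefficients of a fixed \<open>\<rho>\<close> in the images
of a basis element \<open>\<sigma>\<close>. If \<open>x\<^sub>0 \<notin> \<sigma>\<close> both vanish. Otherwise \<open>\<sigma> = {x\<^sub>0} \<union> S\<close>, and
the face \<open>\<sigma> - {y}\<close>, \<open>y \<in> S\<close>, restricts to \<open>x\<^sub>0 \<inter> S - {x\<^sub>0 \<inter> y}\<close>, with the same join
condition and, because \<open>x\<^sub>0\<close> comes first and the classes are ordered like their members,
with the same sign. So if restriction is injective on \<open>S\<close> the two sides agree term by term.
If it is not, \<open>\<phi>(\<sigma>) = 0\<close>; fix a colliding pair \<open>a < b\<close> in \<open>S\<close>. Only the faces deleting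
\<open>a\<close> or \<open>b\<close> can survive \<open>\<phi>\<close>, and they survive together. Then \<open>a\<close> and \<open>b\<close> are adjacent
in \<open>\<sigma>\<close>, as the classes are intervals of the order, so the two faces carry opposite signs and
cancel.
\<close>

lemma sum_Pow_dcoef:
  assumes "finite A" "\<sigma> \<subseteq> A"
  shows "(\<Sum>\<tau>\<in>Pow A. dcoef W K \<sigma> \<tau> * g \<tau>) =
    (\<Sum>y\<in>\<sigma>. if join W (\<sigma> - {y}) = join W \<sigma> then (-1) ^ rk K \<sigma> y * g (\<sigma> - {y}) else 0)"
proof -
  have "(\<Sum>\<tau>\<in>Pow A. dcoef W K \<sigma> \<tau> * g \<tau>) = (\<Sum>y\<in>\<sigma>. \<Sum>\<tau>\<in>Pow A. if \<tau> = \<sigma> - {y}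
      then (if join W \<tau> = join W \<sigma> then (-1) ^ rk K \<sigma> y * g \<tau> else 0) else 0)"
    unfolding dcoef_def sum_distrib_right by (subst sum.swap) (intro sum.cong refl; simp)
  also have "\<dots> = (\<Sum>y\<in>\<sigma>. if join W (\<sigma> - {y}) = join W \<sigma> then (-1) ^ rk K \<sigma> y * g (\<sigma> - {y}) else 0)"
    using assms by (intro sum.cong refl) (auto simp: sum.delta)
  finally show ?thesis .
qed

lemma dcoef_image:
  assumes "inj_on f S"
  shows "dcoef W K (f ` S) \<rho> = (\<Sum>y\<in>S. if \<rho> = f ` S - {f y} \<and> join W (f ` S - {f y}) = join W (f ` S)
      then (-1) ^ rk K (f ` S) (f y) else 0)"
  unfolding dcoef_def by (simp add: sum.reindex[OF assms]) (rule sum.cong; auto)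

lemma phicoef_not_mem: "x0 \<notin> \<sigma> \<Longrightarrow> phicoef x0 \<sigma> \<rho> = 0"
  by (simp add: phicoef_def)

lemma phicoef_insert:
  assumes "x0 \<notin> S"
  shows "phicoef x0 (insert x0 S) \<rho> =
    (if inj_on ((\<inter>) x0) S \<and> \<rho> = (\<inter>) x0 ` S then (-1) ^ card S else 0)"
proof -
  have "insert x0 S - {x0} = S" using assms by auto
  then show ?thesis unfolding phicoef_def inj_on_def by (intro if_cong) auto
qed

lemma sum_Pow_phicoef_insert:
  assumes "finite C" "x0 \<notin> S" "(\<inter>) x0 ` S \<subseteq> C"
  shows "(\<Sum>\<rho>\<in>Pow C. phicoef x0 (insert x0 S) \<rho> * h \<rho>) =
    (if inj_on ((\<inter>) x0) S then (-1) ^ card S * h ((\<inter>) x0 ` S) else 0)"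
proof -
  have "(\<Sum>\<rho>\<in>Pow C. phicoef x0 (insert x0 S) \<rho> * h \<rho>) = (\<Sum>\<rho>\<in>Pow C. if \<rho> = (\<inter>) x0 ` S
      then (if inj_on ((\<inter>) x0) S then (-1) ^ card S * h \<rho> else 0) else 0)"
    using assms(2) by (intro sum.cong refl) (simp add: phicoef_insert)
  also have "\<dots> = (if inj_on ((\<inter>) x0) S then (-1) ^ card S * h ((\<inter>) x0 ` S) else 0)"
    using assms(1,3) by (simp add: sum.delta)
  finally show ?thesis .
qed

lemma join_insert_UNIV: "join UNIV (insert x0 S) = x0 \<inter> \<Inter>S"
  unfolding join_def by auto

lemma join_image_Int: "join x0 ((\<inter>) x0 ` S) = x0 \<inter> \<Inter>S"
  unfolding join_def by auto

lemma rk_insert_least: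
  assumes "finite S" "x0 \<notin> S" "K x0 \<le> K y"
  shows "rk K (insert x0 S) y = Suc (rk K S y)"
proof -
  have "{z \<in> insert x0 S. K z \<le> K y} = insert x0 {z \<in> S. K z \<le> K y}" using assms(3) by auto
  then show ?thesis unfolding rk_def using assms(1,2) by simp
qed

lemma rk_image:
  assumes "inj_on f S" "\<And>z. z \<in> S \<Longrightarrow> K' (f z) \<le> K' (f y) \<longleftrightarrow> K z \<le> K y"
  shows "rk K' (f ` S) (f y) = rk K S y"
proof -
  have "{u \<in> f ` S. K' u \<le> K' (f y)} = f ` {z \<in> S. K z \<le> K y}" using assms(2) by auto
  moreover have "inj_on f {z \<in> S. K z \<le> K y}" using assms(1) by (rule inj_on_subset) auto
  ultimately show ?thesis unfolding rk_def by (simp add: card_image)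
qed

lemma rk_adjacent:
  assumes "finite \<sigma>" "inj_on K \<sigma>" "a \<in> \<sigma>" "b \<in> \<sigma>" "K a < K b"
    and "\<And>w. w \<in> \<sigma> \<Longrightarrow> K a < K w \<Longrightarrow> K w < K b \<Longrightarrow> False"
  shows "rk K \<sigma> b = Suc (rk K \<sigma> a)"
proof -
  have "K w \<le> K a" if "w \<in> \<sigma>" "K w \<le> K b" "w \<noteq> b" for w
  proof -
    have "K w \<noteq> K b" using assms(2,4) that by (metis inj_onD)
    then show ?thesis using assms(6) that by fastforce
  qed
  then have "{w \<in> \<sigma>. K w \<le> K b} = insert b {w \<in> \<sigma>. K w \<le> K a}"
    using assms(3-5) by fastforce
  then show ?thesis unfolding rk_def using assms(1,5) by simp
qed

lemma inj_on_Diff_collision_swap: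
  assumes "a \<in> S" "b \<in> S" "a \<noteq> b" "f a = f b" "inj_on f (S - {a})"
  shows "inj_on f (S - {b})"
  using assms unfolding inj_on_def by (metis Diff_iff singletonD singletonI)

lemma image_Diff_collision:
  assumes "b \<in> S" "a \<noteq> b" "f a = f b"
  shows "f ` (S - {a}) = f ` S"
  using assms by (auto simp: image_iff)

lemma Int_Inter_Diff_collision:
  assumes "b \<in> S" "a \<noteq> b" "x0 \<inter> a = x0 \<inter> b"
  shows "x0 \<inter> \<Inter>(S - {a}) = x0 \<inter> \<Inter>S"
proof (cases "a \<in> S")
  case True
  then have "\<Inter>S = a \<inter> \<Inter>(S - {a})" by (metis Inter_insert insert_Diff)
  moreover have "x0 \<inter> \<Inter>(S - {a}) \<subseteq> x0 \<inter> b" using assms(1,2) by blast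
  ultimately show ?thesis using assms(3) by blast
qed simp

lemma sum_cancel_pair:
  fixes t :: "'a \<Rightarrow> 'b::ab_group_add"
  assumes "finite S" "a \<in> S" "b \<in> S" "a \<noteq> b"
    and "\<And>w. w \<in> S - {a, b} \<Longrightarrow> t w = 0" "t b = - t a"
  shows "sum t S = 0"
proof -
  have "sum t S = sum t {a, b}"
    using assms(1-5) by (intro sum.mono_neutral_right) auto
  then show ?thesis using assms(4,6) by simp
qed

lemma phimap_dmap_apply:
  "phimap x0 A (dmap W A K c) \<rho> =
    (\<Sum>\<sigma>\<in>Pow A. c \<sigma> * (\<Sum>\<tau>\<in>Pow A. dcoef W K \<sigma> \<tau> * phicoef x0 \<tau> \<rho>))"
  unfolding phimap_def dmap_def sum_distrib_right sum_distrib_left mult.assoc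
  by (rule sum.swap)

lemma dmap_phimap_apply:
  "dmap W C K (phimap x0 A c) \<rho> =
    (\<Sum>\<sigma>\<in>Pow A. c \<sigma> * (\<Sum>\<rho>'\<in>Pow C. phicoef x0 \<sigma> \<rho>' * dcoef W K \<rho>' \<rho>))"
  unfolding phimap_def dmap_def sum_distrib_right sum_distrib_left mult.assoc
  by (rule sum.swap)

text \<open>
\<open>classes_convex\<close> and \<open>K''_compatible\<close> are the only consequences of the ordering convention
that are needed: each class \<open>\<A>\<^sub>i\<close> is an interval of the order on \<open>\<A>'\<close>, and \<open>K''\<close> orders
\<open>\<A>''\<close> like the classes.
\<close>
locale restriction_order =
  fixes A C :: "'v set set" and x0 :: "'v set" and K K'' :: "'v set \<Rightarrow> nat"
  assumes finite_A: "finite A" and finite_C: "finite C"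
    and restrict_in_C: "(\<inter>) x0 ` (A - {x0}) \<subseteq> C"
    and inj_K: "inj_on K (A - {x0})"
    and K_x0_least: "\<And>y. y \<in> A - {x0} \<Longrightarrow> K x0 \<le> K y"
    and classes_convex: "\<And>y z w. \<lbrakk>y \<in> A - {x0}; z \<in> A - {x0}; w \<in> A - {x0};
      K y < K w; K w < K z; x0 \<inter> y = x0 \<inter> z\<rbrakk> \<Longrightarrow> x0 \<inter> w = x0 \<inter> y"
    and K''_compatible: "\<And>y z. \<lbrakk>y \<in> A - {x0}; z \<in> A - {x0}; x0 \<inter> y \<noteq> x0 \<inter> z\<rbrakk>
      \<Longrightarrow> K'' (x0 \<inter> y) \<le> K'' (x0 \<inter> z) \<longleftrightarrow> K y \<le> K z"
begin

lemma sum_dcoef_phicoef_insert: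
  assumes "insert x0 S \<subseteq> A" "x0 \<notin> S"
  shows "(\<Sum>\<tau>\<in>Pow A. dcoef UNIV K (insert x0 S) \<tau> * phicoef x0 \<tau> \<rho>) =
    (\<Sum>y\<in>S. if x0 \<inter> \<Inter>(S - {y}) = x0 \<inter> \<Inter>S \<and> inj_on ((\<inter>) x0) (S - {y})
                \<and> \<rho> = (\<inter>) x0 ` (S - {y})
             then (-1) ^ (card S + rk K S y) else 0)" (is "_ = ?rhs")
proof -
  have finS: "finite S" using assms(1) finite_A by (metis finite_subset insert_subset)
  have term_eq: "(if join UNIV (insert x0 S - {y}) = join UNIV (insert x0 S)
      then (-1) ^ rk K (insert x0 S) y * phicoef x0 (insert x0 S - {y}) \<rho> else 0) =
    (if x0 \<inter> \<Inter>(S - {y}) = x0 \<inter> \<Inter>S \<and> inj_on ((\<inter>) x0) (S - {y})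
                \<and> \<rho> = (\<inter>) x0 ` (S - {y})
             then (-1) ^ (card S + rk K S y) else 0)" if y: "y \<in> S" for y
  proof -
    have rk_insert: "rk K (insert x0 S) y = Suc (rk K S y)"
      using y assms by (intro rk_insert_least finS K_x0_least) auto
    have "rk K (insert x0 S) y + card (S - {y}) = card S + rk K S y"
      unfolding rk_insert using card_Suc_Diff1[OF finS y] by linarith
    then have sign: "(-1::rat) ^ rk K (insert x0 S) y * (-1) ^ card (S - {y})
        = (-1) ^ (card S + rk K S y)"
      by (simp only: power_add[symmetric])
    have "insert x0 S - {y} = insert x0 (S - {y})" using y assms(2) by auto
    then show ?thesis using assms(2) by (simp add: join_insert_UNIV phicoef_insert sign)
  qed
  have "(\<Sum>\<tau>\<in>Pow A. dcoef UNIV K (insert x0 S) \<tau> * phicoef x0 \<tau> \<rho>) =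
    (\<Sum>y\<in>S. if join UNIV (insert x0 S - {y}) = join UNIV (insert x0 S)
      then (-1) ^ rk K (insert x0 S) y * phicoef x0 (insert x0 S - {y}) \<rho> else 0)"
    using assms finS by (simp add: sum_Pow_dcoef[OF finite_A assms(1)] phicoef_not_mem)
  also have "\<dots> = ?rhs" by (intro sum.cong refl term_eq)
  finally show ?thesis .
qed

lemma sum_phicoef_dcoef_insert_inj:
  assumes "S \<subseteq> A - {x0}" and inj: "inj_on ((\<inter>) x0) S"
  shows "(\<Sum>\<rho>'\<in>Pow C. phicoef x0 (insert x0 S) \<rho>' * dcoef x0 K'' \<rho>' \<rho>) =
    (\<Sum>y\<in>S. if x0 \<inter> \<Inter>(S - {y}) = x0 \<inter> \<Inter>S \<and> \<rho> = (\<inter>) x0 ` (S - {y})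
             then (-1) ^ (card S + rk K S y) else 0)" (is "_ = ?rhs")
proof -
  have image_Diff: "(\<inter>) x0 ` S - {x0 \<inter> y} = (\<inter>) x0 ` (S - {y})" if "y \<in> S" for y
    using inj that by (simp add: inj_on_image_set_diff)
  have rk_eq: "rk K'' ((\<inter>) x0 ` S) (x0 \<inter> y) = rk K S y" if y: "y \<in> S" for y
  proof (rule rk_image[OF inj])
    fix z assume z: "z \<in> S"
    show "K'' (x0 \<inter> z) \<le> K'' (x0 \<inter> y) \<longleftrightarrow> K z \<le> K y"
    proof (cases "z = y")
      case False
      then have "x0 \<inter> z \<noteq> x0 \<inter> y" using inj z y by (metis inj_onD)
      moreover have "z \<in> A - {x0}" "y \<in> A - {x0}" using assms(1) z y by (metis subsetD)+
      ultimately show ?thesis by (rule K''_compatible[rotated 2])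
    qed simp
  qed
  have "(\<Sum>\<rho>'\<in>Pow C. phicoef x0 (insert x0 S) \<rho>' * dcoef x0 K'' \<rho>' \<rho>)
      = (-1) ^ card S * dcoef x0 K'' ((\<inter>) x0 ` S) \<rho>"
  proof -
    have "x0 \<notin> S" "(\<inter>) x0 ` S \<subseteq> C" using assms(1) restrict_in_C by auto
    then show ?thesis using inj by (simp add: sum_Pow_phicoef_insert[OF finite_C])
  qed
  also have "\<dots> = ?rhs"
    unfolding dcoef_image[OF inj] sum_distrib_left
    by (intro sum.cong refl) (simp add: image_Diff rk_eq join_image_Int power_add)
  finally show ?thesis .
qed

lemma collision_adjacent:
  assumes S: "S \<subseteq> A - {x0}" and ab: "a \<in> S" "b \<in> S" "x0 \<inter> a = x0 \<inter> b" "K a < K b"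
    and inj: "inj_on ((\<inter>) x0) (S - {a})"
  shows "rk K S b = Suc (rk K S a)"
proof (rule rk_adjacent[OF _ _ ab(1,2,4)])
  show "finite S" using S finite_A by (metis finite_Diff finite_subset)
  show "inj_on K S" using inj_K S by (rule inj_on_subset)
  fix w assume w: "w \<in> S" "K a < K w" "K w < K b"
  have "x0 \<inter> w = x0 \<inter> a"
    using classes_convex[OF subsetD[OF S ab(1)] subsetD[OF S ab(2)] subsetD[OF S w(1)] w(2,3) ab(3)] .
  then have "x0 \<inter> w = x0 \<inter> b" using ab(3) by simp
  moreover have "w \<in> S - {a}" "b \<in> S - {a}" using w ab by auto
  ultimately have "w = b" by (rule inj_onD[OF inj])
  then show False using w(3) by simp
qed

lemma collision_terms_cancel:
  assumes S: "S \<subseteq> A - {x0}" and not_inj: "\<not> inj_on ((\<inter>) x0) S"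
  shows "(\<Sum>y\<in>S. if x0 \<inter> \<Inter>(S - {y}) = x0 \<inter> \<Inter>S \<and> inj_on ((\<inter>) x0) (S - {y})
                \<and> \<rho> = (\<inter>) x0 ` (S - {y})
             then (-1) ^ (card S + rk K S y) else 0 :: rat) = 0"
    (is "sum ?t S = 0")
proof -
  have finS: "finite S" using S finite_A by (metis finite_Diff finite_subset)
  obtain a b where ab: "a \<in> S" "b \<in> S" "a \<noteq> b" "x0 \<inter> a = x0 \<inter> b" "K a < K b"
  proof -
    obtain p q where pq: "p \<in> S" "q \<in> S" "p \<noteq> q" "x0 \<inter> p = x0 \<inter> q"
      using not_inj unfolding inj_on_def by blast
    have "K p \<noteq> K q" using inj_K S pq by (metis inj_onD subsetD)
    then show ?thesis using that pq by (metis linorder_neqE_nat)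
  qed
  show ?thesis
  proof (rule sum_cancel_pair[OF finS ab(1-3)])
    fix w assume "w \<in> S - {a, b}"
    then have "\<not> inj_on ((\<inter>) x0) (S - {w})" using ab unfolding inj_on_def by auto
    then show "?t w = 0" by simp
  next
    show "?t b = - ?t a"
    proof (cases "inj_on ((\<inter>) x0) (S - {a})")
      case False
      then have "\<not> inj_on ((\<inter>) x0) (S - {b})"
        using inj_on_Diff_collision_swap[of b S a] ab by metis
      then show ?thesis using False by simp
    next
      case True
      have inj_b: "inj_on ((\<inter>) x0) (S - {b})" using inj_on_Diff_collision_swap[OF ab(1-4) True] .
      have "rk K S b = Suc (rk K S a)" using collision_adjacent[OF S ab(1,2,4,5) True] .
      moreover have "x0 \<inter> \<Inter>(S - {a}) = x0 \<inter> \<Inter>S" "x0 \<inter> \<Inter>(S - {b}) = x0 \<inter> \<Inter>S"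
        using Int_Inter_Diff_collision[OF ab(2,3,4)]
          Int_Inter_Diff_collision[OF ab(1) ab(3)[symmetric] ab(4)[symmetric]] .
      moreover have "(\<inter>) x0 ` (S - {a}) = (\<inter>) x0 ` S" "(\<inter>) x0 ` (S - {b}) = (\<inter>) x0 ` S"
        using image_Diff_collision[of b S a "(\<inter>) x0"] image_Diff_collision[of a S b "(\<inter>) x0"] ab
        by simp_all
      ultimately show ?thesis using True inj_b by simp
    qed
  qed
qed

lemma dcoef_phicoef_commute:
  assumes "\<sigma> \<subseteq> A"
  shows "(\<Sum>\<tau>\<in>Pow A. dcoef UNIV K \<sigma> \<tau> * phicoef x0 \<tau> \<rho>) =
    (\<Sum>\<rho>'\<in>Pow C. phicoef x0 \<sigma> \<rho>' * dcoef x0 K'' \<rho>' \<rho>)"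
proof (cases "x0 \<in> \<sigma>")
  case False
  then have "phicoef x0 (\<sigma> - {y}) \<rho> = 0" for y by (simp add: phicoef_not_mem)
  with False show ?thesis
    by (simp add: sum_Pow_dcoef[OF finite_A assms] phicoef_not_mem cong: if_cong)
next
  case True
  define S where "S = \<sigma> - {x0}"
  have \<sigma>: "\<sigma> = insert x0 S" and S: "S \<subseteq> A - {x0}" "x0 \<notin> S"
    using True assms unfolding S_def by auto
  have "insert x0 S \<subseteq> A" using assms \<sigma> by simp
  note lhs = sum_dcoef_phicoef_insert[OF this S(2)]
  show ?thesis
  proof (cases "inj_on ((\<inter>) x0) S")
    case True
    then have "inj_on ((\<inter>) x0) (S - {y})" for y by (rule inj_on_subset) auto
    then show ?thesis
      unfolding \<sigma> lhs sum_phicoef_dcoef_insert_inj[OF S(1) True] by (intro sum.cong refl) simp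
  next
    case False
    then show ?thesis
      unfolding \<sigma> lhs collision_terms_cancel[OF S(1) False]
      using S restrict_in_C by (subst sum_Pow_phicoef_insert[OF finite_C]) auto
  qed
qed

theorem phimap_dmap_commute:
  "phimap x0 A (dmap UNIV A K c) = dmap x0 C K'' (phimap x0 A c)"
proof
  fix \<rho>
  show "phimap x0 A (dmap UNIV A K c) \<rho> = dmap x0 C K'' (phimap x0 A c) \<rho>"
    unfolding phimap_dmap_apply dmap_phimap_apply
    by (intro sum.cong refl) (simp add: dcoef_phicoef_commute)
qed

end

lemma keyA_apply:
  assumes "inj_on x {0..n}" "i \<le> n"
  shows "keyA n x (x i) = i"
  unfolding keyA_def
proof (rule Least_equality)
  fix j assume "j \<le> n \<and> x j = x i"
  then show "i \<le> j" using assms by (auto simp: inj_on_eq_iff)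
qed (use assms in simp)

lemma keyA''_apply:
  assumes "i \<in> {1..n}"
  shows "keyA'' n x (x 0 \<inter> x i) \<in> {1..n}" "x 0 \<inter> x (keyA'' n x (x 0 \<inter> x i)) = x 0 \<inter> x i"
  using LeastI[of "\<lambda>j. 1 \<le> j \<and> j \<le> n \<and> x 0 \<inter> x j = x 0 \<inter> x i" i] assms
  unfolding keyA''_def by auto

locale ordered_classes =
  fixes n :: nat and x :: "nat \<Rightarrow> 'v set" and cls :: "nat \<Rightarrow> nat"
  assumes cls_eq_iff: "\<And>a b. a \<in> {1..n} \<Longrightarrow> b \<in> {1..n} \<Longrightarrow>
      cls a = cls b \<longleftrightarrow> x 0 \<inter> x a = x 0 \<inter> x b"
    and cls_less_imp_less: "\<And>a b. a \<in> {1..n} \<Longrightarrow> b \<in> {1..n} \<Longrightarrow> cls a < cls b \<Longrightarrow> a < b"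
begin

lemma le_iff_cls_less:
  assumes "a \<in> {1..n}" "b \<in> {1..n}" "x 0 \<inter> x a \<noteq> x 0 \<inter> x b"
  shows "a \<le> b \<longleftrightarrow> cls a < cls b"
proof -
  have "cls a \<noteq> cls b" using cls_eq_iff assms by blast
  then show ?thesis using cls_less_imp_less[OF assms(1,2)] cls_less_imp_less[OF assms(2,1)] by linarith
qed

lemma class_interval:
  assumes "a \<in> {1..n}" "b \<in> {1..n}" "k \<in> {1..n}" "a < k" "k < b" "x 0 \<inter> x a = x 0 \<inter> x b"
  shows "x 0 \<inter> x k = x 0 \<inter> x a"
proof (rule ccontr)
  assume ne: "x 0 \<inter> x k \<noteq> x 0 \<inter> x a"
  then have "cls a < cls k" using le_iff_cls_less[OF assms(1,3)] assms(4) by simp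
  moreover have "cls k < cls b" using le_iff_cls_less[OF assms(3,2)] assms(5,6) ne by simp
  ultimately show False using cls_eq_iff[OF assms(1,2)] assms(6) by simp
qed

lemma keyA''_le_iff:
  assumes "a \<in> {1..n}" "b \<in> {1..n}" "x 0 \<inter> x a \<noteq> x 0 \<inter> x b"
  shows "keyA'' n x (x 0 \<inter> x a) \<le> keyA'' n x (x 0 \<inter> x b) \<longleftrightarrow> a \<le> b"
proof -
  note ma = keyA''_apply[OF assms(1), of x] and mb = keyA''_apply[OF assms(2), of x]
  have "cls (keyA'' n x (x 0 \<inter> x a)) = cls a" "cls (keyA'' n x (x 0 \<inter> x b)) = cls b"
    using cls_eq_iff ma mb assms by blast+
  then show ?thesis
    using le_iff_cls_less[OF ma(1) mb(1)] le_iff_cls_less[OF assms] ma(2) mb(2) assms(3) by simp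
qed

lemma arrangement_restriction_order:
  assumes inj: "inj_on x {0..n}"
  shows "restriction_order (x ` {0..n}) ((\<lambda>i. x 0 \<inter> x i) ` {1..n}) (x 0) (keyA n x) (keyA'' n x)"
proof -
  have deleted: "x ` {0..n} - {x 0} = x ` {1..n}"
  proof -
    have "{0..n} - {0} = {1..n}" by auto
    then show ?thesis using inj_on_image_set_diff[OF inj, of "{0..n}" "{0}"] by simp
  qed
  have key: "keyA n x (x i) = i" if "i \<in> {0..n}" for i using keyA_apply[OF inj] that by simp
  have index: "keyA n x y \<in> {1..n}" "x (keyA n x y) = y" if "y \<in> x ` {1..n}" for y
    using that key by auto
  show ?thesis
  proof (unfold_locales, unfold deleted)
    show "(\<inter>) (x 0) ` x ` {1..n} \<subseteq> (\<lambda>i. x 0 \<inter> x i) ` {1..n}" by auto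
    show "inj_on (keyA n x) (x ` {1..n})" by (rule inj_onI) (metis index(2))
    show "keyA n x (x 0) \<le> keyA n x y" if "y \<in> x ` {1..n}" for y using key[of 0] by simp
  next
    fix y z w assume y: "y \<in> x ` {1..n}" and z: "z \<in> x ` {1..n}" and w: "w \<in> x ` {1..n}"
      and lt: "keyA n x y < keyA n x w" "keyA n x w < keyA n x z" and eq: "x 0 \<inter> y = x 0 \<inter> z"
    note idx = index[OF y] index[OF z] index[OF w]
    have "x 0 \<inter> x (keyA n x w) = x 0 \<inter> x (keyA n x y)"
      by (rule class_interval[OF idx(1) idx(3) idx(5) lt]) (simp add: idx(2,4) eq)
    then show "x 0 \<inter> w = x 0 \<inter> y" by (simp add: idx(2,6))
  next
    fix y z assume y: "y \<in> x ` {1..n}" and z: "z \<in> x ` {1..n}" and ne: "x 0 \<inter> y \<noteq> x 0 \<inter> z"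
    note idx = index[OF y] index[OF z]
    show "keyA'' n x (x 0 \<inter> y) \<le> keyA'' n x (x 0 \<inter> z) \<longleftrightarrow> keyA n x y \<le> keyA n x z"
      using keyA''_le_iff[OF idx(1) idx(3)] ne by (simp add: idx(2,4))
  qed auto
qed

end

theorem lemma3p1:
  fixes n :: nat and x :: "nat \<Rightarrow> (complex ^ 'l) set"
    and c :: "(complex ^ 'l) set set \<Rightarrow> rat"
  assumes arr: "is_arrangement n x"
    and order: "\<exists>cls :: nat \<Rightarrow> nat.
                  (\<forall>a\<in>{1..n}. \<forall>b\<in>{1..n}. cls a = cls b \<longleftrightarrow> x 0 \<inter> x a = x 0 \<inter> x b)
                \<and> (\<forall>a\<in>{1..n}. \<forall>b\<in>{1..n}. cls a < cls b \<longrightarrow> a < b)"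
    and supp: "\<And>\<sigma>. c \<sigma> \<noteq> 0 \<Longrightarrow> \<sigma> \<subseteq> x ` {0..n}"
  shows "phimap (x 0) (x ` {0..n}) (dmap UNIV (x ` {0..n}) (keyA n x) c)
       = dmap (x 0) ((\<lambda>i. x 0 \<inter> x i) ` {1..n}) (keyA'' n x)
              (phimap (x 0) (x ` {0..n}) c)"
proof -
  have "\<exists>cls. ordered_classes n x cls" using order by (simp add: ordered_classes_def Ball_def)
  then obtain cls where "ordered_classes n x cls" ..
  moreover have "inj_on x {0..n}" using arr unfolding is_arrangement_def by blast
  ultimately interpret restriction_order "x ` {0..n}" "(\<lambda>i. x 0 \<inter> x i) ` {1..n}" "x 0"
      "keyA n x" "keyA'' n x"
    by (rule ordered_classes.arrangement_restriction_order)
  show ?thesis by (rule phimap_dmap_commute)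
qed

end
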